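(* Let $T$ be a first-order theory and $p(\bar x)$ a type over $T$. For all sentences $\varphi,\sigma$: $(\varphi\to\sigma)\in[T]^p_\infty$ if and only if $\sigma\in[T+\varphi]^p_\infty$.
   Context: $p(\bar x)$ is a set of formulas with free variables among $\bar x$, consistent with $T$. For a theory $S$, $\mathrm{Th}(S)$ is its set of first-order consequences; $(S)^p=\{\neg\exists\bar x\varphi(\bar x): S\models\forall\bar x(\varphi(\bar x)\to\psi(\bar x))\text{ for all }\psi\in p\}$; $[S]^p=\mathrm{Th}(S+(S)^p)$. Recursively: $[S]^p_0=\mathrm{Th}(S)$, $[S]^p_{\alpha+1}=[[S]^p_\alpha]^p$, $[S]^p_\lambda=\bigcup_{\alpha<\lambda}[S]^p_\alpha$ for limit $\lambda$, and $[S]^p_\infty=\bigcup_{\alpha\in\mathrm{Ord}}[S]^p_\alpha$. *)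

theory Defs
  imports Main
begin

text \<open>Terms over function symbols 'f (used at any arity) with variables indexed by nat.\<close>
datatype 'f trm = Var nat | Fn 'f "'f trm list"

datatype ('f, 'r) fm =
    Bot
  | Eq "'f trm" "'f trm"
  | Rel 'r "'f trm list"
  | Imp "('f, 'r) fm" "('f, 'r) fm"
  | Ex nat "('f, 'r) fm"

definition Neg :: "('f, 'r) fm \<Rightarrow> ('f, 'r) fm" where
  "Neg \<phi> = Imp \<phi> Bot"

definition Exs :: "nat list \<Rightarrow> ('f, 'r) fm \<Rightarrow> ('f, 'r) fm" where
  "Exs xs \<phi> = foldr Ex xs \<phi>"

fun tvars :: "'f trm \<Rightarrow> nat set" where
  "tvars (Var n) = {n}"
| "tvars (Fn f ts) = (\<Union>t\<in>set ts. tvars t)"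

fun frees :: "('f, 'r) fm \<Rightarrow> nat set" where
  "frees Bot = {}"
| "frees (Eq s t) = tvars s \<union> tvars t"
| "frees (Rel r ts) = (\<Union>t\<in>set ts. tvars t)"
| "frees (Imp \<phi> \<psi>) = frees \<phi> \<union> frees \<psi>"
| "frees (Ex x \<phi>) = frees \<phi> - {x}"

definition sentence :: "('f, 'r) fm \<Rightarrow> bool" where
  "sentence \<phi> \<longleftrightarrow> frees \<phi> = {}"

record ('u, 'f, 'r) struct =
  dom :: "'u set"
  fn  :: "'f \<Rightarrow> 'u list \<Rightarrow> 'u"
  rl  :: "'r \<Rightarrow> 'u list \<Rightarrow> bool"

definition is_struct :: "('u, 'f, 'r) struct \<Rightarrow> bool" where
  "is_struct M \<longleftrightarrow> dom M \<noteq> {} \<and> (\<forall>f ds. set ds \<subseteq> dom M \<longrightarrow> fn M f ds \<in> dom M)"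

fun eval :: "('u, 'f, 'r) struct \<Rightarrow> (nat \<Rightarrow> 'u) \<Rightarrow> 'f trm \<Rightarrow> 'u" where
  "eval M a (Var n) = a n"
| "eval M a (Fn f ts) = fn M f (map (eval M a) ts)"

fun sat :: "('u, 'f, 'r) struct \<Rightarrow> (nat \<Rightarrow> 'u) \<Rightarrow> ('f, 'r) fm \<Rightarrow> bool" where
  "sat M a Bot = False"
| "sat M a (Eq s t) = (eval M a s = eval M a t)"
| "sat M a (Rel r ts) = rl M r (map (eval M a) ts)"
| "sat M a (Imp \<phi> \<psi>) = (sat M a \<phi> \<longrightarrow> sat M a \<psi>)"
| "sat M a (Ex x \<phi>) = (\<exists>d\<in>dom M. sat M (a(x := d)) \<phi>)"

text \<open>Truth of a formula in M: satisfied under every assignment into the domain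
  (i.e. truth of its universal closure).\<close>
definition holds :: "('u, 'f, 'r) struct \<Rightarrow> ('f, 'r) fm \<Rightarrow> bool" where
  "holds M \<phi> \<longleftrightarrow> (\<forall>a. range a \<subseteq> dom M \<longrightarrow> sat M a \<phi>)"

definition is_model :: "('u, 'f, 'r) struct \<Rightarrow> ('f, 'r) fm set \<Rightarrow> bool" where
  "is_model M S \<longleftrightarrow> is_struct M \<and> (\<forall>\<phi>\<in>S. holds M \<phi>)"

text \<open>Models range over all structures whose domain is a
  nonempty subset of a fixed set of cardinality |L| + aleph_0 (we use the type of
  formulas itself); by Loewenheim-Skolem this is first-order consequence.\<close>
definition entails :: "('f, 'r) fm set \<Rightarrow> ('f, 'r) fm \<Rightarrow> bool" where
  "entails S \<phi> \<longleftrightarrow>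
     (\<forall>M :: (('f, 'r) fm, 'f, 'r) struct. is_model M S \<longrightarrow> holds M \<phi>)"

definition Th :: "('f, 'r) fm set \<Rightarrow> ('f, 'r) fm set" where
  "Th S = {\<phi>. sentence \<phi> \<and> entails S \<phi>}"

definition is_type :: "('f, 'r) fm set \<Rightarrow> nat list \<Rightarrow> ('f, 'r) fm set \<Rightarrow> bool" where
  "is_type T xs p \<longleftrightarrow> distinct xs \<and> (\<forall>\<psi>\<in>p. frees \<psi> \<subseteq> set xs) \<and>
     (\<exists>M :: (('f, 'r) fm, 'f, 'r) struct. \<exists>a. is_model M T \<and> range a \<subseteq> dom M \<and>
        (\<forall>\<psi>\<in>p. sat M a \<psi>))"

definition omitp :: "('f, 'r) fm set \<Rightarrow> nat list \<Rightarrow> ('f, 'r) fm set \<Rightarrow> ('f, 'r) fm set" where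
  "omitp p xs S = {Neg (Exs xs \<phi>) | \<phi>. frees \<phi> \<subseteq> set xs \<and>
                     (\<forall>\<psi>\<in>p. entails S (Imp \<phi> \<psi>))}"

definition bracket :: "('f, 'r) fm set \<Rightarrow> nat list \<Rightarrow> ('f, 'r) fm set \<Rightarrow> ('f, 'r) fm set" where
  "bracket p xs S = Th (S \<union> omitp p xs S)"

text \<open>The stages [S]^p_alpha (alpha an ordinal) are exactly the sets generated from
  Th(S) by the successor step and by unions of nonempty sets of stages (limits).\<close>
inductive stage :: "('f, 'r) fm set \<Rightarrow> nat list \<Rightarrow> ('f, 'r) fm set \<Rightarrow> ('f, 'r) fm set \<Rightarrow> bool"
  for p xs S where
  base: "stage p xs S (Th S)"
| succ: "stage p xs S X \<Longrightarrow> stage p xs S (bracket p xs X)"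
| lim:  "A \<noteq> {} \<Longrightarrow> (\<And>X. X \<in> A \<Longrightarrow> stage p xs S X) \<Longrightarrow> stage p xs S (\<Union>A)"

definition bracket_inf :: "('f, 'r) fm set \<Rightarrow> nat list \<Rightarrow> ('f, 'r) fm set \<Rightarrow> ('f, 'r) fm set" where
  "bracket_inf p xs S = \<Union>{X. stage p xs S X}"

end

theory Submission
  imports Defs
begin

text \<open>Every stage of the hierarchy for \<open>T + \<phi>\<close> lies inside \<open>Th(X + \<phi>)\<close> for some stage \<open>X\<close>
  of the hierarchy for \<open>T\<close>: if \<open>\<chi>(x)\<close> implies \<open>p\<close> modulo \<open>X + \<phi>\<close>, then \<open>\<phi> \<and> \<chi>\<close> implies \<open>p\<close>
  modulo \<open>X\<close>, so \<open>\<not>\<exists>x (\<phi> \<and> \<chi>)\<close> belongs to \<open>[X]\<^sup>p\<close>, and together with \<open>\<phi>\<close> it yields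
  \<open>\<not>\<exists>x \<chi>\<close>. Conversely, \<open>\<phi>\<close> together with any stage of \<open>T\<close> lies inside a stage of
  \<open>T + \<phi>\<close>, since \<open>S \<mapsto> (S)\<^sup>p\<close> is monotone. The equivalence is then the deduction
  theorem for the sentence \<open>\<phi>\<close>.\<close>

definition And :: "('f, 'r) fm \<Rightarrow> ('f, 'r) fm \<Rightarrow> ('f, 'r) fm" where
  "And \<phi> \<psi> = Neg (Imp \<phi> (Neg \<psi>))"

lemma sat_And [simp]: "sat M a (And \<phi> \<psi>) \<longleftrightarrow> sat M a \<phi> \<and> sat M a \<psi>"
  by (auto simp: And_def Neg_def)

lemma frees_And [simp]: "frees (And \<phi> \<psi>) = frees \<phi> \<union> frees \<psi>"
  by (auto simp: And_def Neg_def)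

lemma Exs_Nil [simp]: "Exs [] \<phi> = \<phi>"
  by (simp add: Exs_def)

lemma Exs_Cons [simp]: "Exs (x # xs) \<phi> = Ex x (Exs xs \<phi>)"
  by (simp add: Exs_def)

lemma frees_Exs [simp]: "frees (Exs xs \<phi>) = frees \<phi> - set xs"
  by (induction xs) auto

lemma sentence_Neg_Exs: "frees \<phi> \<subseteq> set xs \<Longrightarrow> sentence (Neg (Exs xs \<phi>))"
  by (auto simp: sentence_def Neg_def)

lemma eval_cong: "(\<And>n. n \<in> tvars t \<Longrightarrow> a n = b n) \<Longrightarrow> eval M a t = eval M b t"
proof (induction t)
  case (Fn f ts)
  then have "map (eval M a) ts = map (eval M b) ts"
    by auto
  then show ?case
    by (simp only: eval.simps)
qed simp

lemma sat_cong: "(\<And>n. n \<in> frees \<phi> \<Longrightarrow> a n = b n) \<Longrightarrow> sat M a \<phi> \<longleftrightarrow> sat M b \<phi>"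
proof (induction \<phi> arbitrary: a b)
  case (Eq s t)
  have "eval M a s = eval M b s" "eval M a t = eval M b t"
    using Eq.prems by (intro eval_cong; simp)+
  then show ?case
    by simp
next
  case (Rel r ts)
  have "eval M a t = eval M b t" if "t \<in> set ts" for t
    using Rel.prems that by (intro eval_cong) auto
  then have "map (eval M a) ts = map (eval M b) ts"
    by simp
  then show ?case
    by (simp only: sat.simps)
next
  case (Imp \<phi> \<psi>)
  have "sat M a \<phi> \<longleftrightarrow> sat M b \<phi>" "sat M a \<psi> \<longleftrightarrow> sat M b \<psi>"
    using Imp.prems by (intro Imp.IH; simp)+
  then show ?case
    by simp
next
  case (Ex x \<phi>)
  have "sat M (a(x := d)) \<phi> \<longleftrightarrow> sat M (b(x := d)) \<phi>" for d
    using Ex.prems by (intro Ex.IH) simp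
  then show ?case
    by simp
qed simp

lemma sentence_sat_iff: "sentence \<phi> \<Longrightarrow> sat M a \<phi> \<longleftrightarrow> sat M b \<phi>"
  by (rule sat_cong) (simp add: sentence_def)

lemma sentence_holds_iff_sat:
  "sentence \<phi> \<Longrightarrow> range a \<subseteq> dom M \<Longrightarrow> holds M \<phi> \<longleftrightarrow> sat M a \<phi>"
  unfolding holds_def using sentence_sat_iff by blast

lemma sat_Exs_And_sentence:
  assumes "sentence \<phi>" "sat M a \<phi>" "sat M a (Exs xs \<chi>)"
  shows "sat M a (Exs xs (And \<phi> \<chi>))"
  using assms(2,3)
proof (induction xs arbitrary: a)
  case (Cons x xs)
  then obtain d where "d \<in> dom M" "sat M (a(x := d)) (Exs xs \<chi>)"
    by auto
  moreover have "sat M (a(x := d)) \<phi>"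
    using Cons.prems(1) sentence_sat_iff[OF assms(1)] by blast
  ultimately show ?case
    using Cons.IH by auto
qed simp

lemma entails_Imp_iff:
  fixes S :: "('f, 'r) fm set"
  assumes "sentence \<phi>"
  shows "entails S (Imp \<phi> \<sigma>) \<longleftrightarrow> entails (insert \<phi> S) \<sigma>"
proof
  assume "entails S (Imp \<phi> \<sigma>)"
  then show "entails (insert \<phi> S) \<sigma>"
    by (auto simp: entails_def is_model_def holds_def)
next
  assume entails_\<sigma>: "entails (insert \<phi> S) \<sigma>"
  show "entails S (Imp \<phi> \<sigma>)"
    unfolding entails_def holds_def sat.simps(4)
  proof (intro allI impI)
    fix M :: "(('f, 'r) fm, 'f, 'r) struct" and a :: "nat \<Rightarrow> ('f, 'r) fm"
    assume "is_model M S" and a: "range a \<subseteq> dom M" and "sat M a \<phi>"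
    then have "is_model M (insert \<phi> S)"
      using sentence_holds_iff_sat[OF assms a] by (simp add: is_model_def)
    with entails_\<sigma> a show "sat M a \<sigma>"
      by (simp add: entails_def holds_def)
  qed
qed

lemma entails_Imp_And_iff: "entails S (Imp (And \<phi> \<chi>) \<psi>) \<longleftrightarrow> entails S (Imp \<phi> (Imp \<chi> \<psi>))"
  by (auto simp: entails_def holds_def)

lemma mem_entails: "\<phi> \<in> S \<Longrightarrow> entails S \<phi>"
  by (auto simp: entails_def is_model_def)

lemma is_model_Th:
  fixes M :: "(('f, 'r) fm, 'f, 'r) struct"
  shows "is_model M S \<Longrightarrow> is_model M (Th S)"
  by (auto simp: is_model_def Th_def entails_def)

lemma entails_if_subset_Th: "entails S \<phi> \<Longrightarrow> S \<subseteq> Th S' \<Longrightarrow> entails S' \<phi>"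
  unfolding entails_def by (meson is_model_Th is_model_def subsetD)

lemma Th_subset_Th:
  assumes "S \<subseteq> Th S'"
  shows "Th S \<subseteq> Th S'"
  using entails_if_subset_Th[OF _ assms] by (auto simp: Th_def)

lemma Th_mono: "S \<subseteq> S' \<Longrightarrow> Th S \<subseteq> Th S'"
  by (auto simp: Th_def entails_def is_model_def)

lemma mem_Th: "\<phi> \<in> S \<Longrightarrow> sentence \<phi> \<Longrightarrow> \<phi> \<in> Th S"
  by (simp add: Th_def mem_entails)

lemma subset_Th: "\<forall>\<phi>\<in>S. sentence \<phi> \<Longrightarrow> S \<subseteq> Th S"
  by (auto intro: mem_Th)

lemma omitp_mono: "S \<subseteq> S' \<Longrightarrow> omitp p xs S \<subseteq> omitp p xs S'"
  unfolding omitp_def entails_def is_model_def by blast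

lemma bracket_mono: "S \<subseteq> S' \<Longrightarrow> bracket p xs S \<subseteq> bracket p xs S'"
  unfolding bracket_def by (intro Th_mono Un_mono omitp_mono)

lemma Th_subset_bracket: "Th S \<subseteq> bracket p xs S"
  unfolding bracket_def by (simp add: Th_mono)

lemma stage_sentences: "stage p xs S X \<Longrightarrow> \<forall>\<phi>\<in>X. sentence \<phi>"
  by (induction rule: stage.induct) (auto simp: bracket_def Th_def)

lemma omitp_subset_Th_insert_bracket:
  fixes X Y :: "('f, 'r) fm set"
  assumes "sentence \<phi>" and "Y \<subseteq> Th (insert \<phi> X)"
  shows "omitp p xs Y \<subseteq> Th (insert \<phi> (bracket p xs X))"
proof
  fix \<theta> assume "\<theta> \<in> omitp p xs Y"
  then obtain \<chi> where \<theta>: "\<theta> = Neg (Exs xs \<chi>)" and frees_\<chi>: "frees \<chi> \<subseteq> set xs"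
    and \<chi>_implies_p: "\<forall>\<psi>\<in>p. entails Y (Imp \<chi> \<psi>)"
    unfolding omitp_def by blast
  have "\<forall>\<psi>\<in>p. entails (insert \<phi> X) (Imp \<chi> \<psi>)"
    using \<chi>_implies_p entails_if_subset_Th[OF _ assms(2)] by blast
  then have "\<forall>\<psi>\<in>p. entails X (Imp (And \<phi> \<chi>) \<psi>)"
    by (simp add: entails_Imp_And_iff entails_Imp_iff[OF assms(1)])
  moreover have frees_And_\<chi>: "frees (And \<phi> \<chi>) \<subseteq> set xs"
    using frees_\<chi> assms(1) by (simp add: sentence_def)
  ultimately have "Neg (Exs xs (And \<phi> \<chi>)) \<in> omitp p xs X"
    unfolding omitp_def by blast
  then have omitted: "Neg (Exs xs (And \<phi> \<chi>)) \<in> bracket p xs X"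
    unfolding bracket_def using frees_And_\<chi> by (intro mem_Th sentence_Neg_Exs) auto
  have "entails (insert \<phi> (bracket p xs X)) \<theta>"
    unfolding entails_def
  proof (intro allI impI)
    fix M :: "(('f, 'r) fm, 'f, 'r) struct"
    assume "is_model M (insert \<phi> (bracket p xs X))"
    then have "holds M \<phi>" "holds M (Neg (Exs xs (And \<phi> \<chi>)))"
      using omitted by (auto simp: is_model_def)
    then show "holds M \<theta>"
      unfolding \<theta> holds_def Neg_def sat.simps(1,4)
      using sat_Exs_And_sentence[OF assms(1)] by blast
  qed
  then show "\<theta> \<in> Th (insert \<phi> (bracket p xs X))"
    using frees_\<chi> by (simp add: Th_def \<theta> sentence_Neg_Exs)
qed

lemma stage_insert_subset_Th_stage:
  assumes "\<forall>\<chi>\<in>T. sentence \<chi>" and "sentence \<phi>"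
  shows "stage p xs (insert \<phi> T) Y \<Longrightarrow> \<exists>X. stage p xs T X \<and> Y \<subseteq> Th (insert \<phi> X)"
proof (induction rule: stage.induct)
  case base
  have "Th (insert \<phi> T) \<subseteq> Th (insert \<phi> (Th T))"
    using subset_Th[OF assms(1)] by (intro Th_mono) auto
  then show ?case
    using stage.base by blast
next
  case (succ Y)
  then obtain X where X: "stage p xs T X" and Y: "Y \<subseteq> Th (insert \<phi> X)"
    by blast
  have "X \<subseteq> bracket p xs X"
    using subset_Th[OF stage_sentences[OF X]] Th_subset_bracket by blast
  then have "Y \<subseteq> Th (insert \<phi> (bracket p xs X))"
    using Y Th_mono[of "insert \<phi> X"] by blast
  moreover have "omitp p xs Y \<subseteq> Th (insert \<phi> (bracket p xs X))"
    using omitp_subset_Th_insert_bracket[OF assms(2) Y] .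
  ultimately have "bracket p xs Y \<subseteq> Th (insert \<phi> (bracket p xs X))"
    unfolding bracket_def by (intro Th_subset_Th) auto
  then show ?case
    using stage.succ[OF X] by blast
next
  case (lim A)
  then obtain f where f: "\<And>Y. Y \<in> A \<Longrightarrow> stage p xs T (f Y) \<and> Y \<subseteq> Th (insert \<phi> (f Y))"
    by metis
  have "Y \<subseteq> Th (insert \<phi> (\<Union>(f ` A)))" if "Y \<in> A" for Y
    using f[OF that] Th_mono[of "insert \<phi> (f Y)" "insert \<phi> (\<Union>(f ` A))"] that by blast
  moreover have "stage p xs T (\<Union>(f ` A))"
    using f lim.hyps(1) by (auto intro!: stage.lim)
  ultimately show ?case
    by blast
qed

lemma stage_subset_stage_insert:
  assumes "sentence \<phi>"
  shows "stage p xs T X \<Longrightarrow> \<exists>Y. stage p xs (insert \<phi> T) Y \<and> insert \<phi> X \<subseteq> Y"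
proof (induction rule: stage.induct)
  case base
  have "\<phi> \<in> Th (insert \<phi> T)"
    using assms by (simp add: mem_Th)
  moreover have "Th T \<subseteq> Th (insert \<phi> T)"
    by (rule Th_mono) auto
  ultimately show ?case
    using stage.base by blast
next
  case (succ X)
  then obtain Y where Y: "stage p xs (insert \<phi> T) Y" and XY: "insert \<phi> X \<subseteq> Y"
    by blast
  have "\<phi> \<in> Th Y"
    using XY assms by (intro mem_Th) auto
  then have "\<phi> \<in> bracket p xs Y"
    using Th_subset_bracket by blast
  moreover have "bracket p xs X \<subseteq> bracket p xs Y"
    using XY by (intro bracket_mono) auto
  ultimately show ?case
    using stage.succ[OF Y] by blast
next
  case (lim A)
  then obtain g where g: "\<And>X. X \<in> A \<Longrightarrow> stage p xs (insert \<phi> T) (g X) \<and> insert \<phi> X \<subseteq> g X"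
    by metis
  obtain X\<^sub>0 where "X\<^sub>0 \<in> A"
    using lim.hyps(1) by blast
  then have "insert \<phi> (\<Union>A) \<subseteq> \<Union>(g ` A)"
    using g by blast
  moreover have "stage p xs (insert \<phi> T) (\<Union>(g ` A))"
    using g lim.hyps(1) by (auto intro!: stage.lim)
  ultimately show ?case
    by blast
qed

theorem mainTheorem15:
  fixes T p :: "('f, 'r) fm set" and xs :: "nat list" and \<phi> \<sigma> :: "('f, 'r) fm"
  assumes "\<forall>\<chi>\<in>T. sentence \<chi>"
    and "is_type T xs p"
    and "sentence \<phi>" and "sentence \<sigma>"
  shows "Imp \<phi> \<sigma> \<in> bracket_inf p xs T \<longleftrightarrow> \<sigma> \<in> bracket_inf p xs (insert \<phi> T)"
proof
  assume "Imp \<phi> \<sigma> \<in> bracket_inf p xs T"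
  then obtain X where X: "stage p xs T X" and "Imp \<phi> \<sigma> \<in> X"
    unfolding bracket_inf_def by blast
  moreover obtain Y where Y: "stage p xs (insert \<phi> T) Y" and XY: "insert \<phi> X \<subseteq> Y"
    using stage_subset_stage_insert[OF assms(3) X] by blast
  ultimately have "entails Y (Imp \<phi> \<sigma>)"
    using mem_entails by blast
  then have "\<sigma> \<in> Th Y"
    using XY assms(4) by (simp add: entails_Imp_iff[OF assms(3)] insert_absorb Th_def)
  then show "\<sigma> \<in> bracket_inf p xs (insert \<phi> T)"
    unfolding bracket_inf_def using stage.succ[OF Y] Th_subset_bracket by blast
next
  assume "\<sigma> \<in> bracket_inf p xs (insert \<phi> T)"
  then obtain Y where Y: "stage p xs (insert \<phi> T) Y" and "\<sigma> \<in> Y"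
    unfolding bracket_inf_def by blast
  moreover obtain X where X: "stage p xs T X" and "Y \<subseteq> Th (insert \<phi> X)"
    using stage_insert_subset_Th_stage[OF assms(1,3) Y] by blast
  ultimately have "entails X (Imp \<phi> \<sigma>)"
    by (auto simp: entails_Imp_iff[OF assms(3)] Th_def)
  then have "Imp \<phi> \<sigma> \<in> Th X"
    using assms(3,4) by (simp add: Th_def sentence_def)
  then show "Imp \<phi> \<sigma> \<in> bracket_inf p xs T"
    unfolding bracket_inf_def using stage.succ[OF X] Th_subset_bracket by blast
qed

end
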